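(* Let $\delta\in\Lambda$ be any root ($\delta^2=-2$) and let $\delta=\delta_{\mathbb K_\gamma}+\delta_{\mathbb E_\gamma}$ with $\delta_{\mathbb K_\gamma}\in\mathbb K_\gamma^\vee$, $\delta_{\mathbb E_\gamma}\in\mathbb E_\gamma^\vee$ be its orthogonal decomposition. Then $\delta_{\mathbb K_\gamma}-d_1\in\mathbb K_\gamma$ and $\delta_{\mathbb E_\gamma}-d_2\in\mathbb E_\gamma$. In particular $\Lambda=\mathbb Z\delta+\mathbb K_\gamma\oplus\mathbb E_\gamma$.
   Context: $\Lambda=\mathbb U(2)\oplus\mathbb U\oplus\mathbb E_8(2)$ (Enriques lattice; $\mathbb U$ hyperbolic plane, $\mathbb E_8$ negative-definite, $(2)$ scaling by 2). Setting: $\iota$ is a fixed-point-free involution of a Kummer surface $K_{\tau,\tau'}=\mathrm{Km}(E_\tau\times E_{\tau'})$ with $\mathbf K\subset H^2(K_{\tau,\tau'},\mathbb Z)_-$, where $\mathbf K\cong\mathbb U(2)\oplus\mathbb U(2)$ is the image of $H^1(E_\tau,\mathbb Z)\otimes H^1(E_{\tau'},\mathbb Z)$; $\alpha$ is a marking with $\alpha(H^2_-)=\Lambda$; $\gamma\in A_{\mathbf K}\setminus\{0\}$ is the patching element of $\iota$. Put $\mathbb K_\gamma=\alpha(\mathbf K)\cong\mathbb U(2)\oplus\mathbb U(2)$ and $\mathbb E_\gamma=\alpha(\mathbf K^{\perp_{H^2_-}})$, the orthogonal complement of $\mathbb K_\gamma$ in $\Lambda$, which is isometric to $\mathbb E_8(2)$;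 both embed primitively in $\Lambda$, and $\Lambda=\mathbb Z(d_1+d_2)+\mathbb K_\gamma\oplus\mathbb E_\gamma\subset\mathbb K_\gamma^\vee\oplus\mathbb E_\gamma^\vee$ for some $d_1\in\mathbb K_\gamma^\vee\setminus\mathbb K_\gamma$, $d_2\in\mathbb E_\gamma^\vee\setminus\mathbb E_\gamma$. *)

theory Defs
  imports Complex_Main "HOL-Library.Function_Algebras"
begin

text \<open>Vectors of the ambient rational space Q^12 are modelled as functions nat => rat
  vanishing at indices >= 12.  The Enriques lattice Lambda = U(2) + U + E8(2) is Z^12
  inside Q^12 with the Gram matrix lam_gram.\<close>

type_synonym qvec = "nat \<Rightarrow> rat"

definition amb :: "qvec set" where
  "amb = {v. \<forall>i\<ge>12. v i = 0}"

definition smul :: "rat \<Rightarrow> qvec \<Rightarrow> qvec" where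
  "smul q v = (\<lambda>i. q * v i)"

definition U_gram :: "nat \<Rightarrow> nat \<Rightarrow> int" where
  "U_gram i j = (if (i = 0 \<and> j = 1) \<or> (i = 1 \<and> j = 0) then 1 else 0)"

definition E8_gram :: "nat \<Rightarrow> nat \<Rightarrow> int" where
  "E8_gram i j =
     (if i = j then -2
      else if {i, j} \<in> {{0,1},{1,2},{2,3},{3,4},{4,5},{5,6},{4,7}} then 1 else 0)"

definition lam_gram :: "nat \<Rightarrow> nat \<Rightarrow> int" where
  "lam_gram i j =
     (if i < 2 \<and> j < 2 then 2 * U_gram i j
      else if 2 \<le> i \<and> i < 4 \<and> 2 \<le> j \<and> j < 4 then U_gram (i - 2) (j - 2)
      else if 4 \<le> i \<and> i < 12 \<and> 4 \<le> j \<and> j < 12 then 2 * E8_gram (i - 4) (j - 4)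
      else 0)"

definition UU2_gram :: "nat \<Rightarrow> nat \<Rightarrow> int" where
  "UU2_gram i j =
     (if i < 2 \<and> j < 2 then 2 * U_gram i j
      else if 2 \<le> i \<and> i < 4 \<and> 2 \<le> j \<and> j < 4 then 2 * U_gram (i - 2) (j - 2)
      else 0)"

definition E82_gram :: "nat \<Rightarrow> nat \<Rightarrow> int" where
  "E82_gram i j = 2 * E8_gram i j"

definition bil :: "qvec \<Rightarrow> qvec \<Rightarrow> rat" where
  "bil v w = (\<Sum>i<12. \<Sum>j<12. of_int (lam_gram i j) * v i * w j)"

definition Lam :: "qvec set" where
  "Lam = {v \<in> amb. \<forall>i. v i \<in> \<int>}"

definition zspan :: "nat \<Rightarrow> (nat \<Rightarrow> qvec) \<Rightarrow> qvec set" where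
  "zspan n b = {(\<Sum>i<n. smul (of_int (c i)) (b i)) | c. True}"

definition isometric_to :: "qvec set \<Rightarrow> nat \<Rightarrow> (nat \<Rightarrow> nat \<Rightarrow> int) \<Rightarrow> bool" where
  "isometric_to S n G \<longleftrightarrow>
     (\<exists>b. (\<forall>i<n. b i \<in> amb) \<and> S = zspan n b
        \<and> (\<forall>c::nat \<Rightarrow> int. (\<Sum>i<n. smul (of_int (c i)) (b i)) = 0 \<longrightarrow> (\<forall>i<n. c i = 0))
        \<and> (\<forall>i<n. \<forall>j<n. bil (b i) (b j) = of_int (G i j)))"

text \<open>S tensor Q inside Q^12 (for a subgroup S).\<close>
definition rat_hull :: "qvec set \<Rightarrow> qvec set" where
  "rat_hull S = {v \<in> amb. \<exists>m::int. m > 0 \<and> smul (of_int m) v \<in> S}"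

definition dual_lat :: "qvec set \<Rightarrow> qvec set" where
  "dual_lat S = {v \<in> rat_hull S. \<forall>w\<in>S. bil v w \<in> \<int>}"

definition primitive_in_Lam :: "qvec set \<Rightarrow> bool" where
  "primitive_in_Lam S \<longleftrightarrow> S \<subseteq> Lam \<and>
     (\<forall>v\<in>Lam. \<forall>m::int. m \<noteq> 0 \<longrightarrow> smul (of_int m) v \<in> S \<longrightarrow> v \<in> S)"

definition orth_Lam :: "qvec set \<Rightarrow> qvec set" where
  "orth_Lam S = {v \<in> Lam. \<forall>w\<in>S. bil v w = 0}"

end

theory Submission
  imports Defs
begin

(* The Gram matrix of K = U(2) + U(2) is twice a unimodular one, so K is nondegenerate with
   dual (1/2) K; hence 2 d1 \<in> K, and then 2 d2 = 2 (d1 + d2) - 2 d1 \<in> Lam \<inter> K^\<perp> = E.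
   Write \<delta> = m (d1 + d2) + k + e with k \<in> K, e \<in> E.  All norms in K and in E lie in 4Z,
   so for even m the norm of \<delta> would lie in 4Z, not -2: thus m is odd and
   \<delta> \<equiv> d1 + d2 modulo K + E, which gives the new generator of Lam.  Nondegeneracy of K makes
   the splitting of \<delta> into components in dual K and dual E unique, namely m d1 + k and m d2 + e. *)

lemma sum_fun_apply: "(\<Sum>i\<in>A. f i) x = (\<Sum>i\<in>A. f i x)"
  for f :: "'a \<Rightarrow> 'b \<Rightarrow> 'c::comm_monoid_add"
  by (induction A rule: infinite_finite_induct) auto

lemma sum_lessThan_4: "(\<Sum>i<4. f i) = f 0 + f 1 + f 2 + (f (3::nat) :: 'a::comm_monoid_add)"
  by (simp add: lessThan_nat_numeral ac_simps)

lemma U_gram_sym: "U_gram i j = U_gram j i"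
  unfolding U_gram_def by auto

lemma E8_gram_sym: "E8_gram i j = E8_gram j i"
  unfolding E8_gram_def by (simp add: insert_commute)

lemma lam_gram_sym: "lam_gram i j = lam_gram j i"
  unfolding lam_gram_def by (simp add: E8_gram_sym U_gram_sym conj_commute)

lemma UU2_gram_sym: "UU2_gram i j = UU2_gram j i"
  unfolding UU2_gram_def by (simp add: U_gram_sym conj_commute)

lemma UU2_gram_even: "even (UU2_gram i j)"
  unfolding UU2_gram_def by simp

lemma UU2_gram_diag: "UU2_gram i i = 0"
  unfolding UU2_gram_def U_gram_def by auto

lemma E82_gram_sym: "E82_gram i j = E82_gram j i"
  unfolding E82_gram_def by (simp add: E8_gram_sym)

lemma E82_gram_even: "even (E82_gram i j)"
  unfolding E82_gram_def by simp

lemma E82_gram_diag: "E82_gram i i = -4"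
  unfolding E82_gram_def E8_gram_def by simp

lemma bil_sym: "bil v w = bil w v"
  unfolding bil_def
  by (subst sum.swap) (simp add: lam_gram_sym mult.commute mult.left_commute)

lemma bil_add_left: "bil (v + w) u = bil v u + bil w u"
  unfolding bil_def by (simp add: algebra_simps sum.distrib)

lemma bil_diff_left: "bil (v - w) u = bil v u - bil w u"
  unfolding bil_def by (simp add: algebra_simps sum_subtractf)

lemma bil_smul_left: "bil (smul q v) w = q * bil v w"
  unfolding bil_def smul_def by (simp add: algebra_simps sum_distrib_left)

lemma bil_add_right: "bil u (v + w) = bil u v + bil u w"
  by (metis bil_sym bil_add_left)

lemma bil_smul_right: "bil w (smul q v) = q * bil w v"
  by (metis bil_sym bil_smul_left)

lemma bil_zero_left [simp]: "bil 0 w = 0"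
  unfolding bil_def by simp

lemma bil_sum_left: "bil (\<Sum>i\<in>A. f i) w = (\<Sum>i\<in>A. bil (f i) w)"
proof (induction A rule: infinite_finite_induct)
  case (insert x F)
  then show ?case by (simp only: sum.insert[OF insert.hyps] bil_add_left insert.IH)
qed (metis sum.infinite bil_zero_left, simp only: sum.empty bil_zero_left)

lemma bil_sum_right: "bil w (\<Sum>i\<in>A. f i) = (\<Sum>i\<in>A. bil w (f i))"
  by (simp add: bil_sym[of w] bil_sum_left)

lemma bil_lincomb:
  "bil (\<Sum>i<n. smul (c i) (b i)) (\<Sum>j<n. smul (d j) (b j))
     = (\<Sum>i<n. \<Sum>j<n. c i * d j * bil (b i) (b j))"
  by (simp add: bil_sum_left bil_sum_right bil_smul_left bil_smul_right sum_distrib_left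
      mult.assoc) (rule sum.swap[THEN trans], simp add: ac_simps)

definition int_submodule :: "qvec set \<Rightarrow> bool" where
  "int_submodule S \<longleftrightarrow>
     0 \<in> S \<and> (\<forall>x\<in>S. \<forall>y\<in>S. x + y \<in> S) \<and> (\<forall>x\<in>S. \<forall>a::int. smul (of_int a) x \<in> S)"

lemma int_submoduleD:
  assumes "int_submodule S"
  shows int_submodule_0: "0 \<in> S"
    and int_submodule_add: "x \<in> S \<Longrightarrow> y \<in> S \<Longrightarrow> x + y \<in> S"
    and int_submodule_smul: "x \<in> S \<Longrightarrow> smul (of_int a) x \<in> S"
  using assms unfolding int_submodule_def by blast+

lemma int_submodule_smul_Ints:
  "int_submodule S \<Longrightarrow> q \<in> \<int> \<Longrightarrow> x \<in> S \<Longrightarrow> smul q x \<in> S"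
  by (auto elim: Ints_cases intro: int_submodule_smul)

lemma int_submodule_uminus:
  assumes "int_submodule S" and "x \<in> S"
  shows "- x \<in> S"
proof -
  have "- x = smul (of_int (-1)) x"
    by (simp add: smul_def fun_eq_iff)
  then show ?thesis
    using int_submodule_smul[OF assms, of "-1"] by simp
qed

lemma int_submodule_diff:
  "int_submodule S \<Longrightarrow> x \<in> S \<Longrightarrow> y \<in> S \<Longrightarrow> x - y \<in> S"
  using int_submodule_add[of S x "- y"] int_submodule_uminus by simp

lemma mem_zspan: "x \<in> zspan n b \<longleftrightarrow> (\<exists>c. x = (\<Sum>i<n. smul (of_int (c i)) (b i)))"
  unfolding zspan_def by auto

lemma int_submodule_zspan: "int_submodule (zspan n b)"
  unfolding int_submodule_def
proof (intro conjI ballI allI)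
  show "0 \<in> zspan n b"
    unfolding mem_zspan
    by (rule exI[of _ "\<lambda>_. 0"]) (simp add: fun_eq_iff sum_fun_apply smul_def)
  fix x assume "x \<in> zspan n b"
  then obtain c where x: "x = (\<Sum>i<n. smul (of_int (c i)) (b i))"
    unfolding mem_zspan by blast
  show "smul (of_int a) x \<in> zspan n b" for a
    unfolding mem_zspan x by (intro exI[of _ "\<lambda>i. a * c i"])
      (simp add: fun_eq_iff sum_fun_apply smul_def sum_distrib_left algebra_simps)
  fix y assume "y \<in> zspan n b"
  then obtain d where y: "y = (\<Sum>i<n. smul (of_int (d i)) (b i))"
    unfolding mem_zspan by blast
  show "x + y \<in> zspan n b"
    unfolding mem_zspan x y by (intro exI[of _ "\<lambda>i. c i + d i"])
      (simp add: fun_eq_iff sum_fun_apply smul_def sum.distrib algebra_simps)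
qed

lemma zspan_basis: "j < n \<Longrightarrow> b j \<in> zspan n b"
  unfolding mem_zspan
proof (intro exI[of _ "\<lambda>i. if i = j then 1 else 0"] ext)
  fix x assume "j < n"
  have "(\<Sum>i<n. smul (of_int (if i = j then 1 else 0)) (b i)) x
      = (\<Sum>i<n. if i = j then b i x else 0)"
    unfolding sum_fun_apply by (intro sum.cong refl) (simp add: smul_def)
  then show "b j x = (\<Sum>i<n. smul (of_int (if i = j then 1 else 0)) (b i)) x"
    using \<open>j < n\<close> by simp
qed

lemma isometric_to_int_submodule: "isometric_to S n G \<Longrightarrow> int_submodule S"
  unfolding isometric_to_def using int_submodule_zspan by blast

lemma quad_form_4dvd:
  fixes G :: "nat \<Rightarrow> nat \<Rightarrow> int"
  assumes sym: "\<And>i j. G i j = G j i" and even: "\<And>i j. even (G i j)"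
    and diag: "\<And>i. 4 dvd G i i"
  shows "4 dvd (\<Sum>i<n. \<Sum>j<n. c i * c j * G i j)"
proof (induction n)
  case (Suc n)
  have "(\<Sum>i<Suc n. \<Sum>j<Suc n. c i * c j * G i j)
      = (\<Sum>i<n. \<Sum>j<n. c i * c j * G i j) + 2 * (\<Sum>j<n. c n * c j * G n j)
        + c n * c n * G n n"
    by (simp add: sum.distrib sym mult.commute mult.left_commute)
  moreover have "even (\<Sum>j<n. c n * c j * G n j)"
    using even by (simp add: dvd_sum)
  then have "4 dvd 2 * (\<Sum>j<n. c n * c j * G n j)"
    by (auto elim: evenE)
  ultimately show ?case
    using Suc diag by simp
qed simp

lemma isometric_to_bil_self_4dvd:
  assumes iso: "isometric_to S n G"
    and "\<And>i j. G i j = G j i" "\<And>i j. even (G i j)" "\<And>i. 4 dvd G i i"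
    and "x \<in> S"
  shows "\<exists>t::int. bil x x = of_int (4 * t)"
proof -
  obtain b where S: "S = zspan n b" and gram: "\<forall>i<n. \<forall>j<n. bil (b i) (b j) = of_int (G i j)"
    using iso unfolding isometric_to_def by blast
  obtain c where x: "x = (\<Sum>i<n. smul (of_int (c i)) (b i))"
    using \<open>x \<in> S\<close> unfolding S mem_zspan by blast
  have "bil x x = of_int (\<Sum>i<n. \<Sum>j<n. c i * c j * G i j)"
    unfolding x bil_lincomb of_int_sum of_int_mult using gram by simp
  moreover obtain t where "(\<Sum>i<n. \<Sum>j<n. c i * c j * G i j) = 4 * t"
    using quad_form_4dvd[of G c n] assms(2-4) by (auto elim: dvdE)
  ultimately show ?thesis
    by metis
qed

lemma zspan_rat_multiple:
  assumes "p \<noteq> 0" and "smul (of_int p) v \<in> zspan n b"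
  shows "\<exists>q. v = (\<Sum>i<n. smul (q i) (b i))"
proof -
  obtain c where c: "smul (of_int p) v = (\<Sum>i<n. smul (of_int (c i)) (b i))"
    using assms(2) unfolding mem_zspan by blast
  have "v x = (\<Sum>i<n. smul (of_int (c i) / of_int p) (b i)) x" for x
    using fun_cong[OF c, of x] assms(1)
    by (simp add: sum_fun_apply smul_def sum_divide_distrib[symmetric] field_simps)
  then show ?thesis
    by (intro exI[of _ "\<lambda>i. of_int (c i) / of_int p"] ext)
qed

lemma UU2_basis_expansion:
  assumes gram: "\<forall>i<4. \<forall>j<4. bil (b i) (b j) = of_int (UU2_gram i j)"
    and v: "v = (\<Sum>i<4. smul (q i) (b i))"
  shows "smul 2 v = smul (bil v (b 1)) (b 0) + smul (bil v (b 0)) (b 1)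
                  + smul (bil v (b 3)) (b 2) + smul (bil v (b 2)) (b 3)"
proof -
  have "bil v (b 1) = 2 * q 0" "bil v (b 0) = 2 * q 1" "bil v (b 3) = 2 * q 2" "bil v (b 2) = 2 * q 3"
    using gram by (simp_all add: v sum_lessThan_4 bil_add_left bil_smul_left UU2_gram_def U_gram_def)
  then show ?thesis
    by (simp add: v sum_lessThan_4 fun_eq_iff sum_fun_apply smul_def algebra_simps)
qed

lemma isometric_to_UU2_double:
  assumes "isometric_to K 4 UU2_gram" and "p \<noteq> 0" and "smul (of_int p) v \<in> K"
  obtains b :: "nat \<Rightarrow> qvec" where "\<forall>j<4. b j \<in> K"
    and "smul 2 v = smul (bil v (b 1)) (b 0) + smul (bil v (b 0)) (b 1)
                  + smul (bil v (b 3)) (b 2) + smul (bil v (b 2)) (b 3)"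
proof -
  obtain b where K: "K = zspan 4 b" and gram: "\<forall>i<4. \<forall>j<4. bil (b i) (b j) = of_int (UU2_gram i j)"
    using assms(1) unfolding isometric_to_def by blast
  obtain q where "v = (\<Sum>i<4. smul (q i) (b i))"
    using zspan_rat_multiple assms(2,3) unfolding K by blast
  show ?thesis
  proof (rule that)
    show "\<forall>j<4. b j \<in> K"
      unfolding K using zspan_basis by blast
    show "smul 2 v = smul (bil v (b 1)) (b 0) + smul (bil v (b 0)) (b 1)
                  + smul (bil v (b 3)) (b 2) + smul (bil v (b 2)) (b 3)"
      by (rule UU2_basis_expansion[OF gram \<open>v = _\<close>])
  qed
qed

lemma UU2_dual_lat_double:
  assumes K: "isometric_to K 4 UU2_gram" and "d \<in> dual_lat K"
  shows "smul 2 d \<in> K"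
proof -
  obtain p :: int where "p > 0" "smul (of_int p) d \<in> K" and d_int: "\<forall>k\<in>K. bil d k \<in> \<int>"
    using \<open>d \<in> dual_lat K\<close> unfolding dual_lat_def rat_hull_def by auto
  obtain b :: "nat \<Rightarrow> qvec" where b: "\<forall>j<4. b j \<in> K"
    and expansion: "smul 2 d = smul (bil d (b 1)) (b 0) + smul (bil d (b 0)) (b 1)
                  + smul (bil d (b 3)) (b 2) + smul (bil d (b 2)) (b 3)"
    by (rule isometric_to_UU2_double[OF K]) (use \<open>p > 0\<close> \<open>smul _ d \<in> K\<close> in auto)
  have sub: "int_submodule K"
    using K by (rule isometric_to_int_submodule)
  have "smul (bil d (b j)) (b i) \<in> K" if "i < 4" "j < 4" for i j
    using int_submodule_smul_Ints[OF sub] d_int b that by blast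
  then show ?thesis
    unfolding expansion by (intro int_submodule_add[OF sub]) simp_all
qed

lemma UU2_orth_eq_0:
  assumes K: "isometric_to K 4 UU2_gram" and "p \<noteq> 0" and "smul (of_int p) w \<in> K"
    and orth: "\<forall>k\<in>K. bil w k = 0"
  shows "w = 0"
proof -
  obtain b :: "nat \<Rightarrow> qvec" where b: "\<forall>j<4. b j \<in> K"
    and expansion: "smul 2 w = smul (bil w (b 1)) (b 0) + smul (bil w (b 0)) (b 1)
                  + smul (bil w (b 3)) (b 2) + smul (bil w (b 2)) (b 3)"
    by (rule isometric_to_UU2_double[OF assms(1-3)])
  have "bil w (b j) = 0" if "j < 4" for j
    using orth b that by blast
  then have "smul 2 w = 0"
    unfolding expansion by (simp add: smul_def fun_eq_iff)
  then show ?thesis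
    by (simp add: smul_def fun_eq_iff)
qed

lemma rat_hull_orth:
  assumes "v \<in> rat_hull S" and "\<forall>s\<in>S. bil s w = 0"
  shows "bil v w = 0"
proof -
  obtain m :: int where "m > 0" "smul (of_int m) v \<in> S"
    using assms(1) unfolding rat_hull_def by auto
  then show ?thesis
    using assms(2) by (auto simp: bil_smul_left)
qed

lemma int_submodule_smul_even:
  assumes "int_submodule S" and "smul 2 x \<in> S" and "even m"
  shows "smul (of_int m) x \<in> S"
proof -
  obtain n where "m = 2 * n"
    using \<open>even m\<close> by (auto elim: evenE)
  then have "smul (of_int m) x = smul (of_int n) (smul 2 x)"
    by (simp add: smul_def fun_eq_iff)
  then show ?thesis
    using assms(1,2) by (simp add: int_submodule_smul)
qed

lemma int_submodule_smul_odd: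
  assumes "int_submodule S" and "smul 2 x \<in> S" and "odd m"
  shows "smul (of_int m) x - x \<in> S"
proof -
  have "smul (of_int m) x - x = smul (of_int (m - 1)) x"
    by (simp add: smul_def fun_eq_iff algebra_simps)
  then show ?thesis
    using int_submodule_smul_even[OF assms(1,2), of "m - 1"] \<open>odd m\<close> by simp
qed

lemma span_generator_shift_subset:
  assumes K: "int_submodule K" and E: "int_submodule E"
    and "x = y + k1 + e1" "k1 \<in> K" "e1 \<in> E"
  shows "{smul (of_int m) x + k + e | m k e. k \<in> K \<and> e \<in> E}
         \<subseteq> {smul (of_int m) y + k + e | m k e. k \<in> K \<and> e \<in> E}"
proof clarify
  fix m k e assume "k \<in> K" "e \<in> E"
  have "smul (of_int m) x + k + e
      = smul (of_int m) y + (smul (of_int m) k1 + k) + (smul (of_int m) e1 + e)"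
    using \<open>x = _\<close> by (simp add: smul_def fun_eq_iff algebra_simps)
  moreover have "smul (of_int m) k1 + k \<in> K" "smul (of_int m) e1 + e \<in> E"
    using assms(4,5) \<open>k \<in> K\<close> \<open>e \<in> E\<close>
    by (simp_all add: int_submodule_add int_submodule_smul K E)
  ultimately show "\<exists>m' k' e'. smul (of_int m) x + k + e = smul (of_int m') y + k' + e'
                    \<and> k' \<in> K \<and> e' \<in> E"
    by blast
qed

lemma span_generator_shift:
  assumes K: "int_submodule K" and E: "int_submodule E"
    and "x = y + k1 + e1" "k1 \<in> K" "e1 \<in> E"
  shows "{smul (of_int m) x + k + e | m k e. k \<in> K \<and> e \<in> E}
         = {smul (of_int m) y + k + e | m k e. k \<in> K \<and> e \<in> E}"
proof
  show "{smul (of_int m) y + k + e | m k e. k \<in> K \<and> e \<in> E}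
        \<subseteq> {smul (of_int m) x + k + e | m k e. k \<in> K \<and> e \<in> E}"
    using \<open>x = _\<close> assms(4,5)
    by (intro span_generator_shift_subset[OF K E, of y x "- k1" "- e1"])
      (simp_all add: int_submodule_uminus K E)
qed (rule span_generator_shift_subset[OF assms])

locale enriques_splitting =
  fixes K E :: "qvec set" and d1 d2 :: qvec
  assumes K_iso: "isometric_to K 4 UU2_gram"
    and E_eq: "E = orth_Lam K"
    and E_iso: "isometric_to E 8 E82_gram"
    and d1_dual: "d1 \<in> dual_lat K"
    and d2_dual: "d2 \<in> dual_lat E"
    and Lam_eq: "Lam = {smul (of_int m) (d1 + d2) + k + e | m k e. k \<in> K \<and> e \<in> E}"
begin

lemma K_submodule: "int_submodule K"
  using K_iso by (rule isometric_to_int_submodule)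

lemma E_submodule: "int_submodule E"
  using E_iso by (rule isometric_to_int_submodule)

lemma E_orth_K: "e \<in> E \<Longrightarrow> k \<in> K \<Longrightarrow> bil e k = 0"
  using E_eq unfolding orth_Lam_def by blast

lemma rat_hull_E_orth_K: "v \<in> rat_hull E \<Longrightarrow> k \<in> K \<Longrightarrow> bil v k = 0"
  using E_orth_K by (blast intro: rat_hull_orth)

lemma twice_d1_in_K: "smul 2 d1 \<in> K"
  using K_iso d1_dual by (rule UU2_dual_lat_double)

lemma twice_d2_in_E: "smul 2 d2 \<in> E"
proof -
  have "smul 2 d2 = smul (of_int 2) (d1 + d2) + (- smul 2 d1) + 0"
    by (simp add: smul_def fun_eq_iff)
  moreover have "- smul 2 d1 \<in> K" "0 \<in> E"
    using twice_d1_in_K K_submodule E_submodule by (simp_all add: int_submodule_uminus int_submodule_0)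
  ultimately have "smul 2 d2 \<in> Lam"
    unfolding Lam_eq by blast
  moreover have "bil (smul 2 d2) k = 0" if "k \<in> K" for k
    using d2_dual that by (simp add: bil_smul_left dual_lat_def rat_hull_E_orth_K)
  ultimately show ?thesis
    unfolding E_eq orth_Lam_def by blast
qed

lemma bil_self_4dvd:
  assumes "k \<in> K" and "e \<in> E"
  shows "\<exists>t::int. bil (k + e) (k + e) = of_int (4 * t)"
proof -
  obtain t1 where "bil k k = of_int (4 * t1)"
    using isometric_to_bil_self_4dvd[OF K_iso UU2_gram_sym UU2_gram_even _ \<open>k \<in> K\<close>]
    by (auto simp: UU2_gram_diag)
  moreover obtain t2 where "bil e e = of_int (4 * t2)"
    using isometric_to_bil_self_4dvd[OF E_iso E82_gram_sym E82_gram_even _ \<open>e \<in> E\<close>]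
    by (auto simp: E82_gram_diag)
  moreover have "bil e k = 0" "bil k e = 0"
    using E_orth_K[OF \<open>e \<in> E\<close> \<open>k \<in> K\<close>] bil_sym by simp_all
  ultimately show ?thesis
    by (intro exI[of _ "t1 + t2"]) (simp add: bil_add_left bil_add_right)
qed

lemma root_coeff_odd:
  assumes \<delta>: "\<delta> = smul (of_int m) (d1 + d2) + k + e" and "k \<in> K" "e \<in> E"
    and root: "bil \<delta> \<delta> = -2"
  shows "odd m"
proof
  assume "even m"
  then have "smul (of_int m) d1 + k \<in> K" "smul (of_int m) d2 + e \<in> E"
    using int_submodule_smul_even[OF K_submodule twice_d1_in_K]
      int_submodule_smul_even[OF E_submodule twice_d2_in_E] \<open>k \<in> K\<close> \<open>e \<in> E\<close>
    by (simp_all add: int_submodule_add K_submodule E_submodule)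
  moreover have "\<delta> = (smul (of_int m) d1 + k) + (smul (of_int m) d2 + e)"
    unfolding \<delta> by (simp add: smul_def fun_eq_iff algebra_simps)
  ultimately obtain t where "(-2 :: rat) = of_int (4 * t)"
    using bil_self_4dvd root by metis
  then have "(-2 :: int) = 4 * t"
    by linarith
  then show False
    by presburger
qed

lemma dual_lat_K_component:
  assumes sum: "\<delta>K + \<delta>E = smul (of_int m) (d1 + d2) + k + e"
    and "\<delta>K \<in> dual_lat K" "\<delta>E \<in> dual_lat E" "k \<in> K" "e \<in> E"
  shows "\<delta>K = smul (of_int m) d1 + k"
proof -
  define w where "w = \<delta>K - smul (of_int m) d1 - k"
  obtain p :: int where "p > 0" "smul (of_int p) \<delta>K \<in> K"
    using \<open>\<delta>K \<in> dual_lat K\<close> unfolding dual_lat_def rat_hull_def by auto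
  have "smul (of_int (2 * p)) w = smul (of_int 2) (smul (of_int p) \<delta>K)
      - smul (of_int (p * m)) (smul 2 d1) - smul (of_int (2 * p)) k"
    unfolding w_def by (simp add: fun_eq_iff smul_def algebra_simps)
  also have "\<dots> \<in> K"
    using \<open>smul _ \<delta>K \<in> K\<close> twice_d1_in_K \<open>k \<in> K\<close>
    by (meson int_submodule_diff int_submodule_smul K_submodule)
  finally have "smul (of_int (2 * p)) w \<in> K" .
  moreover have "bil w k' = 0" if "k' \<in> K" for k'
  proof -
    have "w = smul (of_int m) d2 + e - \<delta>E"
      using sum unfolding w_def by (simp add: fun_eq_iff smul_def algebra_simps)
    moreover have "bil e k' = 0"
      using E_orth_K \<open>e \<in> E\<close> \<open>k' \<in> K\<close> by blast
    ultimately show ?thesis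
      using d2_dual \<open>\<delta>E \<in> dual_lat E\<close> \<open>k' \<in> K\<close>
      by (simp add: bil_add_left bil_diff_left bil_smul_left dual_lat_def rat_hull_E_orth_K)
  qed
  ultimately have "w = 0"
    using \<open>p > 0\<close> by (intro UU2_orth_eq_0[OF K_iso, of "2 * p"]) auto
  then show ?thesis
    unfolding w_def by (simp add: fun_eq_iff algebra_simps)
qed

lemma root_dual_components:
  assumes \<delta>: "\<delta> = smul (of_int m) (d1 + d2) + k + e" and "k \<in> K" "e \<in> E" "odd m"
    and "\<delta> = \<delta>K + \<delta>E" "\<delta>K \<in> dual_lat K" "\<delta>E \<in> dual_lat E"
  shows "\<delta>K - d1 \<in> K" and "\<delta>E - d2 \<in> E"
proof -
  have \<delta>K: "\<delta>K = smul (of_int m) d1 + k"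
    using assms by (intro dual_lat_K_component[of \<delta>K \<delta>E m k e]) simp_all
  then have "\<delta>E = smul (of_int m) d2 + e"
    using assms(1,5) by (simp add: fun_eq_iff smul_def algebra_simps)
  then show "\<delta>K - d1 \<in> K" "\<delta>E - d2 \<in> E"
    using \<delta>K int_submodule_smul_odd[OF K_submodule twice_d1_in_K \<open>odd m\<close>]
      int_submodule_smul_odd[OF E_submodule twice_d2_in_E \<open>odd m\<close>] \<open>k \<in> K\<close> \<open>e \<in> E\<close>
    by (simp_all add: diff_add_eq[symmetric] int_submodule_add K_submodule E_submodule)
qed

lemma Lam_eq_root_span:
  assumes \<delta>: "\<delta> = smul (of_int m) (d1 + d2) + k + e" and "k \<in> K" "e \<in> E" "odd m"
  shows "Lam = {smul (of_int a) \<delta> + k + e | a k e. k \<in> K \<and> e \<in> E}"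
proof -
  have "d1 + d2 = \<delta> + (- (smul (of_int m) d1 - d1) - k) + (- (smul (of_int m) d2 - d2) - e)"
    unfolding \<delta> by (simp add: smul_def fun_eq_iff algebra_simps)
  moreover have "- (smul (of_int m) d1 - d1) - k \<in> K" "- (smul (of_int m) d2 - d2) - e \<in> E"
    using int_submodule_smul_odd[OF K_submodule twice_d1_in_K \<open>odd m\<close>]
      int_submodule_smul_odd[OF E_submodule twice_d2_in_E \<open>odd m\<close>] \<open>k \<in> K\<close> \<open>e \<in> E\<close>
    by (meson int_submodule_diff int_submodule_uminus K_submodule E_submodule)+
  ultimately show ?thesis
    unfolding Lam_eq by (rule span_generator_shift[OF K_submodule E_submodule])
qed

end

theorem lemma3p11:
  fixes K E :: "qvec set" and d1 d2 \<delta> :: qvec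
  assumes "K \<subseteq> Lam"
    and "isometric_to K 4 UU2_gram"
    and "E = orth_Lam K"
    and "isometric_to E 8 E82_gram"
    and "primitive_in_Lam K"
    and "primitive_in_Lam E"
    and "d1 \<in> dual_lat K - K"
    and "d2 \<in> dual_lat E - E"
    and "Lam = {smul (of_int m) (d1 + d2) + k + e | m k e. k \<in> K \<and> e \<in> E}"
    and "\<delta> \<in> Lam"
    and "bil \<delta> \<delta> = -2"
  shows "(\<forall>\<delta>K \<delta>E. \<delta> = \<delta>K + \<delta>E \<and> \<delta>K \<in> dual_lat K \<and> \<delta>E \<in> dual_lat E
            \<longrightarrow> \<delta>K - d1 \<in> K \<and> \<delta>E - d2 \<in> E)
         \<and> Lam = {smul (of_int m) \<delta> + k + e | m k e. k \<in> K \<and> e \<in> E}"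
proof -
  interpret enriques_splitting K E d1 d2
    using assms by unfold_locales auto
  obtain m k e where \<delta>: "\<delta> = smul (of_int m) (d1 + d2) + k + e" "k \<in> K" "e \<in> E"
    using \<open>\<delta> \<in> Lam\<close> unfolding Lam_eq by blast
  have "odd m"
    using root_coeff_odd[OF \<delta>] \<open>bil \<delta> \<delta> = -2\<close> .
  then show ?thesis
    using root_dual_components[OF \<delta> \<open>odd m\<close>] Lam_eq_root_span[OF \<delta> \<open>odd m\<close>] by blast
qed

end
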